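(* Let $T\in[0,\infty]$. For every $\pi\in\Pi$ with $J_T(\pi)<\infty$ and every $\delta_{\mathrm{tol}}>0$ there exists a periodic strategy $\hat\pi\in\Pi$ such that $$J_T(\hat\pi)\le J_T(\pi)+\delta_{\mathrm{tol}}.$$
   Context: Let $G=(V,E,A,\phi)$ be a finite connected undirected graph with node set $V$, edge set $E$, edge lengths $A:E\to\mathbb{R}_{>0}$ and node weights $\phi:V\to\mathbb{R}_{>0}$. Let $|G|$ be its metric graph (each edge $e$ a closed interval of length $A(e)$ glued at its endpoints) with shortest-path metric $d$. Fix $k\ge1$ robots $r_1,\dots,r_k$; $d_k(p,p')=\max_i d(p_i,p'_i)$ on $|G|^k$. Feasible strategies: $\Pi=\{\pi\in C([0,\infty),|G|^k):\ d_k(\pi(t),\pi(t'))\le|t-t'|\ \forall t,t'\ge0\}$, $\pi=(\pi_{r_1},\dots,\pi_{r_k})$. A strategy $\pi$ is periodic if there exist $t^*\ge0$ and $0<W<\infty$ with $\pi(t^*+t+W)=\pi(t^*+t)$ for all $t\ge0$. For $v\in V$, $t\ge0$: $\tau^\pi(v,t)=\sup\{t'\le t:\pi_r(t')=v\text{ for some }r\}$ if nonempty, else $0$; $L^\pi_v(t)=t-\tau^\pi(v,t)$; $M^\pi(t)=\max_v\phi(v)L^\pi_v(t)$. For finite $T\ge0$, $J_T(\pi)=\sup_{t\ge T}M^\pi(t)$; $J_\infty(\pi)=\limsup_{t\to\infty}M^\pi(t)$. *)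

theory Defs
  imports "HOL-Analysis.Analysis" "HOL-Library.Extended_Real"
begin

text \<open>Each edge e
carries an arbitrary fixed orientation ends e = (tail, head); this orientation only serves
to coordinatise points on the edge and has no other meaning.\<close>

definition edge_conn :: "('e \<Rightarrow> 'v \<times> 'v) \<Rightarrow> 'e \<Rightarrow> 'v \<Rightarrow> 'v \<Rightarrow> bool" where
  "edge_conn ends e u v \<longleftrightarrow> ends e = (u, v) \<or> ends e = (v, u)"

definition walk_lengths ::
  "'e set \<Rightarrow> ('e \<Rightarrow> 'v \<times> 'v) \<Rightarrow> ('e \<Rightarrow> real) \<Rightarrow> 'v \<Rightarrow> 'v \<Rightarrow> real set" where
  "walk_lengths E ends A u v =
     {sum_list (map A es) | es xs. length xs = Suc (length es) \<and> hd xs = u \<and> last xs = v \<and>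
        (\<forall>i < length es. es ! i \<in> E \<and> edge_conn ends (es ! i) (xs ! i) (xs ! Suc i))}"

definition node_dist ::
  "'e set \<Rightarrow> ('e \<Rightarrow> 'v \<times> 'v) \<Rightarrow> ('e \<Rightarrow> real) \<Rightarrow> 'v \<Rightarrow> 'v \<Rightarrow> real" where
  "node_dist E ends A u v = Inf (walk_lengths E ends A u v)"

definition wgraph ::
  "'v set \<Rightarrow> 'e set \<Rightarrow> ('e \<Rightarrow> 'v \<times> 'v) \<Rightarrow> ('e \<Rightarrow> real) \<Rightarrow> ('v \<Rightarrow> real) \<Rightarrow> bool" where
  "wgraph V E ends A phi \<longleftrightarrow>
     finite V \<and> V \<noteq> {} \<and> finite E \<and>
     (\<forall>e\<in>E. fst (ends e) \<in> V \<and> snd (ends e) \<in> V \<and> fst (ends e) \<noteq> snd (ends e)) \<and>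
     (\<forall>e\<in>E. \<forall>e'\<in>E. edge_conn ends e' (fst (ends e)) (snd (ends e)) \<longrightarrow> e' = e) \<and>
     (\<forall>e\<in>E. A e > 0) \<and> (\<forall>v\<in>V. phi v > 0) \<and>
     (\<forall>u\<in>V. \<forall>v\<in>V. walk_lengths E ends A u v \<noteq> {})"

text \<open>A point of |G| is either a node, or an interior point of an edge e, at distance s
(0 < s < A e) from the tail fst (ends e). This is a canonical (non-redundant) description
of the quotient of the disjoint union of the closed edge intervals.\<close>
datatype ('v, 'e) mpoint = Node 'v | Inner 'e real

definition mpoints ::
  "'v set \<Rightarrow> 'e set \<Rightarrow> ('e \<Rightarrow> real) \<Rightarrow> ('v, 'e) mpoint set" where
  "mpoints V E A = Node ` V \<union> {Inner e s | e s. e \<in> E \<and> 0 < s \<and> s < A e}"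

definition dist_node ::
  "'e set \<Rightarrow> ('e \<Rightarrow> 'v \<times> 'v) \<Rightarrow> ('e \<Rightarrow> real) \<Rightarrow> ('v, 'e) mpoint \<Rightarrow> 'v \<Rightarrow> real" where
  "dist_node E ends A p w =
     (case p of Node u \<Rightarrow> node_dist E ends A u w
      | Inner e s \<Rightarrow> min (s + node_dist E ends A (fst (ends e)) w)
                         (A e - s + node_dist E ends A (snd (ends e)) w))"

text \<open>Shortest-path metric d on |G|: a shortest path either stays inside a single edge, or
leaves the start point and enters the end point through endpoints of their edges.\<close>
definition mdist ::
  "'e set \<Rightarrow> ('e \<Rightarrow> 'v \<times> 'v) \<Rightarrow> ('e \<Rightarrow> real) \<Rightarrow> ('v, 'e) mpoint \<Rightarrow> ('v, 'e) mpoint \<Rightarrow> real" where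
  "mdist E ends A p q =
     (case q of Node w \<Rightarrow> dist_node E ends A p w
      | Inner e' s' \<Rightarrow>
          (let via = min (s' + dist_node E ends A p (fst (ends e')))
                         (A e' - s' + dist_node E ends A p (snd (ends e')))
           in (case p of Inner e s \<Rightarrow> if e = e' then min \<bar>s - s'\<bar> via else via
               | Node _ \<Rightarrow> via)))"

text \<open>A joint strategy of k robots: str t i is the position of robot i (i < k) at time t;
only times t \<ge> 0 and indices i < k are meaningful.\<close>
type_synonym ('v, 'e) strategy = "real \<Rightarrow> nat \<Rightarrow> ('v, 'e) mpoint"

text \<open>The feasible set Pi: paths in |G|^k that are 1-Lipschitz w.r.t. the max metric d_k
(continuity is implied by the Lipschitz condition).\<close>
definition feasible ::
  "'v set \<Rightarrow> 'e set \<Rightarrow> ('e \<Rightarrow> 'v \<times> 'v) \<Rightarrow> ('e \<Rightarrow> real) \<Rightarrow> nat \<Rightarrow> ('v, 'e) strategy \<Rightarrow> bool" where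
  "feasible V E ends A k str \<longleftrightarrow>
     (\<forall>t\<ge>0. \<forall>i<k. str t i \<in> mpoints V E A) \<and>
     (\<forall>t\<ge>0. \<forall>t'\<ge>0. \<forall>i<k. mdist E ends A (str t i) (str t' i) \<le> \<bar>t - t'\<bar>)"

definition periodic :: "nat \<Rightarrow> ('v, 'e) strategy \<Rightarrow> bool" where
  "periodic k str \<longleftrightarrow>
     (\<exists>tstar\<ge>0. \<exists>W>0. \<forall>t\<ge>0. \<forall>i<k. str (tstar + t + W) i = str (tstar + t) i)"

definition last_visit :: "nat \<Rightarrow> ('v, 'e) strategy \<Rightarrow> 'v \<Rightarrow> real \<Rightarrow> real" where
  "last_visit k str v t =
     (let S = {t'. 0 \<le> t' \<and> t' \<le> t \<and> (\<exists>i<k. str t' i = Node v)} in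
      if S = {} then 0 else Sup S)"

definition latency :: "nat \<Rightarrow> ('v, 'e) strategy \<Rightarrow> 'v \<Rightarrow> real \<Rightarrow> real" where
  "latency k str v t = t - last_visit k str v t"

definition max_wlatency ::
  "'v set \<Rightarrow> ('v \<Rightarrow> real) \<Rightarrow> nat \<Rightarrow> ('v, 'e) strategy \<Rightarrow> real \<Rightarrow> real" where
  "max_wlatency V phi k str t = Max ((\<lambda>v. phi v * latency k str v t) ` V)"

definition cost ::
  "'v set \<Rightarrow> ('v \<Rightarrow> real) \<Rightarrow> nat \<Rightarrow> ereal \<Rightarrow> ('v, 'e) strategy \<Rightarrow> ereal" where
  "cost V phi k T str =
     (if T = \<infinity> then Limsup at_top (\<lambda>t. ereal (max_wlatency V phi k str t))
      else (SUP t\<in>{real_of_ereal T..}. ereal (max_wlatency V phi k str t)))"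

end

theory Submission
  imports Defs "HOL-Library.Real_Mod"
begin

(* Fix a time T0 after which the weighted latencies of the given strategy stay below a bound,
   and a small scale eps.  At the sample times T0 + (n + 1) H record the eps-cell of every robot
   (its node, or the eps-interval of its edge containing it) and the latency of every node
   rounded down to a multiple of eps.  There are only finitely many such records, so two sample
   times t1 < t2 carry the same one.  The periodic strategy follows the given one up to t2, moves
   every robot inside its cell back to its position at t1 within time eps, and then replays
   [t1, t2] forever.  As H exceeds all latency bounds, a node whose last visit before a replayed
   time lies before t1 was also visited shortly before t2, and hence one period earlier in the
   loop; since the latencies at t1 and t2 agree up to eps, every latency grows by at most 4 eps. *)

section \<open>Paths with Lipschitz constant one\<close>

definition triangle_on :: "'a set \<Rightarrow> ('a \<Rightarrow> 'a \<Rightarrow> real) \<Rightarrow> bool" where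
  "triangle_on X d \<longleftrightarrow> (\<forall>p\<in>X. \<forall>q\<in>X. \<forall>r\<in>X. d p r \<le> d p q + d q r)"

definition lip1_path :: "('a \<Rightarrow> 'a \<Rightarrow> real) \<Rightarrow> 'a set \<Rightarrow> real set \<Rightarrow> (real \<Rightarrow> 'a) \<Rightarrow> bool" where
  "lip1_path d X I f \<longleftrightarrow> (\<forall>t\<in>I. f t \<in> X) \<and> (\<forall>t\<in>I. \<forall>t'\<in>I. d (f t) (f t') \<le> \<bar>t - t'\<bar>)"

lemma lip1_pathD:
  assumes "lip1_path d X I f" "t \<in> I"
  shows "f t \<in> X" and "t' \<in> I \<Longrightarrow> d (f t) (f t') \<le> \<bar>t - t'\<bar>"
  using assms unfolding lip1_path_def by auto

lemma lip1_path_subset: "lip1_path d X I f \<Longrightarrow> J \<subseteq> I \<Longrightarrow> lip1_path d X J f"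
  unfolding lip1_path_def by blast

lemma lip1_path_cong: "lip1_path d X I f \<Longrightarrow> (\<And>t. t \<in> I \<Longrightarrow> f t = g t) \<Longrightarrow> lip1_path d X I g"
  unfolding lip1_path_def by simp

lemma lip1_path_shift:
  assumes "lip1_path d X {a..b} f"
  shows "lip1_path d X {a + c..b + c} (\<lambda>t. f (t - c))"
  unfolding lip1_path_def
proof (intro conjI ballI)
  fix t t' assume "t \<in> {a + c..b + c}" "t' \<in> {a + c..b + c}"
  then have "t - c \<in> {a..b}" "t' - c \<in> {a..b}"
    by auto
  then show "f (t - c) \<in> X" "d (f (t - c)) (f (t' - c)) \<le> \<bar>t - t'\<bar>"
    using lip1_pathD(1)[OF assms] lip1_pathD(2)[OF assms, of "t - c" "t' - c"] by auto
qed

lemma lip1_path_union: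
  assumes tri: "triangle_on X d" and ab: "lip1_path d X {a..b} f" and bc: "lip1_path d X {b..c} f"
  shows "lip1_path d X {a..c} f"
proof -
  have X: "f t \<in> X" if "t \<in> {a..c}" for t
    using lip1_pathD(1)[OF ab, of t] lip1_pathD(1)[OF bc, of t] that by (cases "t \<le> b") auto
  have to_b: "d (f t) (f b) \<le> \<bar>t - b\<bar> \<and> d (f b) (f t) \<le> \<bar>b - t\<bar>" if "t \<in> {a..c}" for t
    using lip1_pathD(2)[OF ab, of t b] lip1_pathD(2)[OF ab, of b t]
      lip1_pathD(2)[OF bc, of t b] lip1_pathD(2)[OF bc, of b t] that
    by (cases "t \<le> b") auto
  have "d (f t) (f t') \<le> \<bar>t - t'\<bar>" if t: "t \<in> {a..c}" and t': "t' \<in> {a..c}" for t t'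
  proof -
    consider "t \<le> b" "t' \<le> b" | "b \<le> t" "b \<le> t'" | "min t t' \<le> b" "b \<le> max t t'"
      by linarith
    then show ?thesis
    proof cases
      case 1
      then show ?thesis using lip1_pathD(2)[OF ab, of t t'] t t' by auto
    next
      case 2
      then show ?thesis using lip1_pathD(2)[OF bc, of t t'] t t' by auto
    next
      case 3
      then have b: "b \<in> {a..c}"
        using t t' by auto
      have "d (f t) (f t') \<le> d (f t) (f b) + d (f b) (f t')"
        using tri X[OF t] X[OF b] X[OF t'] unfolding triangle_on_def by blast
      also have "\<dots> \<le> \<bar>t - b\<bar> + \<bar>b - t'\<bar>"
        using to_b[OF t] to_b[OF t'] by linarith
      also have "\<dots> = \<bar>t - t'\<bar>"
        using 3 by (auto simp: abs_if min_def max_def split: if_splits)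
      finally show ?thesis .
    qed
  qed
  then show ?thesis
    using X unfolding lip1_path_def by blast
qed

lemma lip1_path_atLeast:
  assumes "\<And>n :: nat. lip1_path d X {a..c + real n * P} f" and "P > 0"
  shows "lip1_path d X {a..} f"
proof -
  have "f t \<in> X \<and> d (f t) (f t') \<le> \<bar>t - t'\<bar>" if "a \<le> t" "a \<le> t'" for t t'
  proof -
    obtain n :: nat where "(max t t' - c) / P < real n"
      using reals_Archimedean2 by blast
    then have "max t t' \<le> c + real n * P"
      using assms(2) by (simp add: divide_less_eq algebra_simps)
    then show ?thesis
      using lip1_pathD(1)[OF assms(1)[of n], of t] lip1_pathD(2)[OF assms(1)[of n], of t t'] that
      by auto
  qed
  then show ?thesis
    unfolding lip1_path_def by auto
qed

definition periodic_after :: "real \<Rightarrow> real \<Rightarrow> (real \<Rightarrow> 'a) \<Rightarrow> real \<Rightarrow> 'a" where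
  "periodic_after a P f t = (if t < a then f t else f (a + (t - a) rmod P))"

lemma periodic_after_apply: "(\<lambda>t. periodic_after a P F t i) = periodic_after a P (\<lambda>t. F t i)"
  by (simp add: periodic_after_def fun_eq_iff)

lemma periodic_after_eq: "P > 0 \<Longrightarrow> t < a + P \<Longrightarrow> periodic_after a P f t = f t"
  by (simp add: periodic_after_def)

lemma periodic_after_add_mult:
  assumes "0 \<le> P" "a \<le> t"
  shows "periodic_after a P f (t + real n * P) = periodic_after a P f t"
proof -
  have "(t - a + real n * P) rmod P = (t - a) rmod P"
    using rmod_add[of "t - a" P "real n * P"] by simp
  moreover have "a \<le> t + real n * P"
    using assms by (simp add: add_increasing2)
  ultimately show ?thesis
    using assms by (simp add: periodic_after_def algebra_simps)
qed

lemma periodic_after_eq_closed: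
  assumes "P > 0" "f (a + P) = f a" "t \<le> a + P"
  shows "periodic_after a P f t = f t"
proof (cases "t < a + P")
  case False
  then have "t = a + P"
    using assms(3) by simp
  then show ?thesis
    using periodic_after_add_mult[of P a a f 1] periodic_after_eq[OF assms(1), of a a f] assms(1,2)
    by simp
qed (rule periodic_after_eq[OF assms(1)])

lemma split_period:
  assumes "P > 0" "a \<le> t"
  obtains n :: nat and u where "a \<le> u" "u < a + P" "t = u + real n * P"
proof -
  define n where "n = nat \<lfloor>(t - a) / P\<rfloor>"
  have "real n = of_int \<lfloor>(t - a) / P\<rfloor>"
    using assms by (simp add: n_def)
  then have "t = a + (t - a) rmod P + real n * P"
    using assms(1) by (simp add: rmod_def)
  then show ?thesis
    using that[of "a + (t - a) rmod P" n] rmod_nonneg[of P] rmod_less[OF assms(1)] assms(1) by force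
qed

lemma lip1_path_periodic_after:
  assumes tri: "triangle_on X d" and f: "lip1_path d X {0..a + P} f"
    and loop: "f (a + P) = f a" and a: "0 \<le> a" and P: "0 < P"
  shows "lip1_path d X {0..} (periodic_after a P f)"
proof -
  let ?g = "periodic_after a P f"
  have first: "lip1_path d X {0..a + P} ?g"
    using lip1_path_cong[OF f] periodic_after_eq_closed[OF P loop] by simp
  have period: "lip1_path d X {a + real n * P..a + real (Suc n) * P} ?g" for n
  proof -
    have "lip1_path d X {a..a + P} ?g"
      using first by (rule lip1_path_subset) (use a in auto)
    then have "lip1_path d X {a + real n * P..a + P + real n * P} (\<lambda>t. ?g (t - real n * P))"
      by (rule lip1_path_shift)
    then have "lip1_path d X {a + real n * P..a + real (Suc n) * P} (\<lambda>t. ?g (t - real n * P))"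
      by (simp add: algebra_simps)
    then show ?thesis
    proof (rule lip1_path_cong)
      fix t assume "t \<in> {a + real n * P..a + real (Suc n) * P}"
      then show "?g (t - real n * P) = ?g t"
        using periodic_after_add_mult[of P a "t - real n * P" f n] P by simp
    qed
  qed
  have "lip1_path d X {0..a + real n * P} ?g" for n
  proof (induction n)
    case 0
    show ?case
      using first by (rule lip1_path_subset) (use P in auto)
  next
    case (Suc n)
    show ?case
      by (rule lip1_path_union[OF tri Suc period])
  qed
  then show ?thesis
    using P by (rule lip1_path_atLeast)
qed

section \<open>The metric graph\<close>

lemma nth_butlast_append_glue:
  assumes "length xs = Suc n" "ys \<noteq> []" "last xs = hd ys"
  shows "(butlast xs @ ys) ! i = (if i \<le> n then xs ! i else ys ! (i - n))"
proof -
  have len: "length (butlast xs) = n"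
    using assms(1) by simp
  consider "i < n" | "i = n" | "n < i"
    by linarith
  then show ?thesis
  proof cases
    case 2
    have "(butlast xs @ ys) ! i = hd ys"
      using 2 len assms(2) by (simp add: nth_append hd_conv_nth)
    also have "\<dots> = xs ! n"
      using assms(1,3) by (metis diff_Suc_1 last_conv_nth list.size(3) nat.distinct(1))
    finally show ?thesis
      using 2 by simp
  qed (use len assms(1) in \<open>simp_all add: nth_append nth_butlast\<close>)
qed

lemma walk_lengths_refl: "0 \<in> walk_lengths E ends A u u"
  unfolding walk_lengths_def by (rule CollectI, rule exI[of _ "[]"], rule exI[of _ "[u]"]) auto

lemma walk_lengths_edge:
  assumes "e \<in> E" and "edge_conn ends e u v"
  shows "A e \<in> walk_lengths E ends A u v"
  unfolding walk_lengths_def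
  by (rule CollectI, rule exI[of _ "[e]"], rule exI[of _ "[u, v]"]) (simp add: assms)

lemma walk_lengths_append:
  assumes "w1 \<in> walk_lengths E ends A u v" and "w2 \<in> walk_lengths E ends A v w"
  shows "w1 + w2 \<in> walk_lengths E ends A u w"
proof -
  obtain es1 xs1 where 1: "w1 = sum_list (map A es1)" "length xs1 = Suc (length es1)"
    "hd xs1 = u" "last xs1 = v"
    "\<forall>i < length es1. es1 ! i \<in> E \<and> edge_conn ends (es1 ! i) (xs1 ! i) (xs1 ! Suc i)"
    using assms(1) unfolding walk_lengths_def by blast
  obtain es2 xs2 where 2: "w2 = sum_list (map A es2)" "length xs2 = Suc (length es2)"
    "hd xs2 = v" "last xs2 = w"
    "\<forall>i < length es2. es2 ! i \<in> E \<and> edge_conn ends (es2 ! i) (xs2 ! i) (xs2 ! Suc i)"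
    using assms(2) unfolding walk_lengths_def by blast
  define xs where "xs = butlast xs1 @ xs2"
  have ne: "xs1 \<noteq> []" "xs2 \<noteq> []"
    using 1(2) 2(2) by auto
  have xs: "xs ! i = (if i \<le> length es1 then xs1 ! i else xs2 ! (i - length es1))" for i
    unfolding xs_def using 1(2,4) 2(3) ne(2) by (intro nth_butlast_append_glue) auto
  have glue: "xs1 ! length es1 = xs2 ! 0"
    using 1(2,4) 2(3) ne by (simp add: last_conv_nth hd_conv_nth)
  have "length xs = Suc (length (es1 @ es2))"
    using 1(2) 2(2) by (simp add: xs_def)
  moreover have "hd xs = u"
    using xs[of 0] ne 1(3) by (simp add: xs_def hd_conv_nth)
  moreover have "last xs = w"
    using ne(2) 2(4) by (simp add: xs_def)
  moreover have "(es1 @ es2) ! i \<in> E \<and> edge_conn ends ((es1 @ es2) ! i) (xs ! i) (xs ! Suc i)"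
    if "i < length (es1 @ es2)" for i
    using 1(5) 2(5) that xs[of i] xs[of "Suc i"] glue
    by (cases "i < length es1") (auto simp: nth_append Suc_diff_le)
  ultimately show ?thesis
    unfolding walk_lengths_def using 1(1) 2(1) by (intro CollectI exI[of _ "es1 @ es2"] exI[of _ xs]) simp
qed

context
  fixes V :: "'v set" and E :: "'e set" and ends :: "'e \<Rightarrow> 'v \<times> 'v"
    and A :: "'e \<Rightarrow> real" and phi :: "'v \<Rightarrow> real"
  assumes G: "wgraph V E ends A phi"
begin

lemma walk_lengths_nonneg: "w \<in> walk_lengths E ends A u v \<Longrightarrow> 0 \<le> w"
  using G unfolding walk_lengths_def wgraph_def
  by (force simp: in_set_conv_nth less_imp_le intro!: sum_list_nonneg)

lemma node_dist_le_walk_length: "w \<in> walk_lengths E ends A u v \<Longrightarrow> node_dist E ends A u v \<le> w"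
  unfolding node_dist_def using walk_lengths_nonneg by (intro cInf_lower bdd_belowI[of _ 0])

lemma node_dist_self_le: "node_dist E ends A u u \<le> 0"
  using node_dist_le_walk_length[OF walk_lengths_refl] .

lemma node_dist_edge_le:
  assumes "e \<in> E"
  shows "node_dist E ends A (fst (ends e)) (snd (ends e)) \<le> A e"
    and "node_dist E ends A (snd (ends e)) (fst (ends e)) \<le> A e"
  using node_dist_le_walk_length[OF walk_lengths_edge[OF assms]] by (auto simp: edge_conn_def)

lemma node_dist_triangle:
  assumes "u \<in> V" "v \<in> V" "w \<in> V"
  shows "node_dist E ends A u w \<le> node_dist E ends A u v + node_dist E ends A v w"
proof -
  have ne: "walk_lengths E ends A x y \<noteq> {}" if "x \<in> V" "y \<in> V" for x y
    using G that unfolding wgraph_def by blast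
  have "node_dist E ends A u w - w1 \<le> node_dist E ends A v w"
    if w1: "w1 \<in> walk_lengths E ends A u v" for w1
    unfolding node_dist_def[of E ends A v w]
  proof (rule cInf_greatest[OF ne[OF assms(2,3)]])
    fix w2 assume "w2 \<in> walk_lengths E ends A v w"
    with node_dist_le_walk_length[OF walk_lengths_append[OF w1 this]]
    show "node_dist E ends A u w - w1 \<le> w2" by simp
  qed
  then have "node_dist E ends A u w - node_dist E ends A v w \<le> node_dist E ends A u v"
    unfolding node_dist_def[of E ends A u v]
    by (intro cInf_greatest[OF ne[OF assms(1,2)]]) (simp add: algebra_simps)
  then show ?thesis
    by simp
qed

end

definition exits :: "('e \<Rightarrow> 'v \<times> 'v) \<Rightarrow> ('e \<Rightarrow> real) \<Rightarrow> ('v, 'e) mpoint \<Rightarrow> ('v \<times> real) set" where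
  "exits ends A p = (case p of Node u \<Rightarrow> {(u, 0)}
     | Inner e s \<Rightarrow> {(fst (ends e), s), (snd (ends e), A e - s)})"

lemma mdist_le_exits:
  assumes "(x, c) \<in> exits ends A p" "(y, d) \<in> exits ends A q"
  shows "mdist E ends A p q \<le> c + node_dist E ends A x y + d"
  using assms
  by (cases p; cases q) (auto simp: mdist_def dist_node_def exits_def Let_def min_le_iff_disj)

lemma mdist_le_same_edge: "mdist E ends A (Inner e s) (Inner e s') \<le> \<bar>s - s'\<bar>"
  by (simp add: mdist_def Let_def)

lemma dist_node_via_exit:
  "\<exists>x c. (x, c) \<in> exits ends A p \<and> dist_node E ends A p w = c + node_dist E ends A x w"
  by (cases p) (auto simp: dist_node_def exits_def min_def)

lemma mdist_cases:
  "(\<exists>x c y d. (x, c) \<in> exits ends A p \<and> (y, d) \<in> exits ends A q \<and>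
      mdist E ends A p q = c + node_dist E ends A x y + d) \<or>
   (\<exists>e s s'. p = Inner e s \<and> q = Inner e s' \<and> mdist E ends A p q = \<bar>s - s'\<bar>)"
proof (cases q)
  case (Node w)
  obtain x c where "(x, c) \<in> exits ends A p" "dist_node E ends A p w = c + node_dist E ends A x w"
    using dist_node_via_exit[of ends A p E w] by blast
  then show ?thesis
    using Node by (auto simp: mdist_def exits_def)
next
  case (Inner e' s')
  define via where "via = min (s' + dist_node E ends A p (fst (ends e')))
                         (A e' - s' + dist_node E ends A p (snd (ends e')))"
  have "via = s' + dist_node E ends A p (fst (ends e')) \<or>
      via = A e' - s' + dist_node E ends A p (snd (ends e'))"
    unfolding via_def by (simp add: min_def)
  then obtain y d where yd: "(y, d) \<in> exits ends A q" "via = d + dist_node E ends A p y"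
    by (auto simp: Inner exits_def)
  obtain x c where xc: "(x, c) \<in> exits ends A p" "dist_node E ends A p y = c + node_dist E ends A x y"
    using dist_node_via_exit[of ends A p E y] by blast
  have "mdist E ends A p q = (case p of Inner e s \<Rightarrow> if e = e' then min \<bar>s - s'\<bar> via else via
      | Node _ \<Rightarrow> via)"
    unfolding Inner mdist_def via_def Let_def by simp
  then have "mdist E ends A p q = via \<or> (\<exists>s. p = Inner e' s \<and> mdist E ends A p q = \<bar>s - s'\<bar>)"
    by (cases p) (auto simp: min_def)
  moreover have "via = c + node_dist E ends A x y + d"
    using xc yd by simp
  ultimately show ?thesis
    using xc yd Inner by blast
qed

lemma exits_shift:
  assumes "(y, d) \<in> exits ends A (Inner e s)"
  shows "\<exists>d'. (y, d') \<in> exits ends A (Inner e s') \<and> d' \<le> \<bar>s - s'\<bar> + d"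
  using assms by (auto simp: exits_def)

context
  fixes V :: "'v set" and E :: "'e set" and ends :: "'e \<Rightarrow> 'v \<times> 'v"
    and A :: "'e \<Rightarrow> real" and phi :: "'v \<Rightarrow> real"
  assumes G: "wgraph V E ends A phi"
begin

lemma exits_in_nodes: "p \<in> mpoints V E A \<Longrightarrow> (x, c) \<in> exits ends A p \<Longrightarrow> x \<in> V"
  using G unfolding mpoints_def exits_def wgraph_def by auto

lemma node_dist_exits_le:
  assumes "q \<in> mpoints V E A" "(y, d) \<in> exits ends A q" "(y', d') \<in> exits ends A q"
  shows "node_dist E ends A y y' \<le> d + d'"
proof (cases q)
  case (Node u)
  then show ?thesis
    using assms node_dist_self_le[OF G] by (auto simp: exits_def)
next
  case (Inner e s)
  then have "e \<in> E" "0 < s" "s < A e"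
    using assms(1) by (auto simp: mpoints_def)
  then show ?thesis
    using assms(2,3) node_dist_self_le[OF G, of "fst (ends e)"] node_dist_self_le[OF G, of "snd (ends e)"]
      node_dist_edge_le[OF G] unfolding Inner exits_def
    by auto
qed

lemma mdist_le_through_exits:
  assumes p: "p \<in> mpoints V E A" and q: "q \<in> mpoints V E A" and r: "r \<in> mpoints V E A"
    and xc: "(x, c) \<in> exits ends A p" and yd: "(y, d) \<in> exits ends A q"
    and yd': "(y', d') \<in> exits ends A q" and zc: "(z, c') \<in> exits ends A r"
  shows "mdist E ends A p r \<le> (c + node_dist E ends A x y + d) + (d' + node_dist E ends A y' z + c')"
proof -
  have V: "x \<in> V" "y \<in> V" "y' \<in> V" "z \<in> V"
    using exits_in_nodes p q r xc yd yd' zc by blast+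
  have "mdist E ends A p r \<le> c + node_dist E ends A x z + c'"
    by (rule mdist_le_exits[OF xc zc])
  also have "node_dist E ends A x z \<le> node_dist E ends A x y + node_dist E ends A y z"
    using node_dist_triangle[OF G] V by blast
  also have "node_dist E ends A y z \<le> node_dist E ends A y y' + node_dist E ends A y' z"
    using node_dist_triangle[OF G] V by blast
  also have "node_dist E ends A y y' \<le> d + d'"
    by (rule node_dist_exits_le[OF q yd yd'])
  finally show ?thesis
    by simp
qed

lemma triangle_on_mdist: "triangle_on (mpoints V E A) (mdist E ends A)"
  unfolding triangle_on_def
proof (intro ballI)
  fix p q r assume p: "p \<in> mpoints V E A" and q: "q \<in> mpoints V E A" and r: "r \<in> mpoints V E A"
  show "mdist E ends A p r \<le> mdist E ends A p q + mdist E ends A q r"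
    using mdist_cases[of ends A p q E] mdist_cases[of ends A q r E]
  proof (elim disjE exE conjE)
    fix x c y d y' d' z c'
    assume "(x, c) \<in> exits ends A p" "(y, d) \<in> exits ends A q"
      "mdist E ends A p q = c + node_dist E ends A x y + d"
      "(y', d') \<in> exits ends A q" "(z, c') \<in> exits ends A r"
      "mdist E ends A q r = d' + node_dist E ends A y' z + c'"
    then show ?thesis
      using mdist_le_through_exits[OF p q r] by simp
  next
    fix e sp sq y' d' z c'
    assume "p = Inner e sp" "q = Inner e sq" "mdist E ends A p q = \<bar>sp - sq\<bar>"
      "(y', d') \<in> exits ends A q" "(z, c') \<in> exits ends A r"
      "mdist E ends A q r = d' + node_dist E ends A y' z + c'"
    then show ?thesis
      using exits_shift[where y=y' and d=d' and e=e and s=sq and s'=sp] mdist_le_exits[of y' _ ends A p z c' r E]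
      by (fastforce simp: abs_minus_commute)
  next
    fix x c y d e sq sr
    assume "(x, c) \<in> exits ends A p" "(y, d) \<in> exits ends A q"
      "mdist E ends A p q = c + node_dist E ends A x y + d"
      "q = Inner e sq" "r = Inner e sr" "mdist E ends A q r = \<bar>sq - sr\<bar>"
    then show ?thesis
      using exits_shift[where y=y and d=d and e=e and s=sq and s'=sr] mdist_le_exits[of x c ends A p y _ r E]
      by fastforce
  next
    fix e sp sq e' sq' sr
    assume "p = Inner e sp" "q = Inner e sq" "mdist E ends A p q = \<bar>sp - sq\<bar>"
      "q = Inner e' sq'" "r = Inner e' sr" "mdist E ends A q r = \<bar>sq' - sr\<bar>"
    then show ?thesis
      using mdist_le_same_edge[of E ends A e sp sr] by auto
  qed
qed

end

definition cell :: "real \<Rightarrow> ('v, 'e) mpoint \<Rightarrow> 'v + 'e \<times> int" where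
  "cell \<epsilon> p = (case p of Node u \<Rightarrow> Inl u | Inner e s \<Rightarrow> Inr (e, \<lfloor>s / \<epsilon>\<rfloor>))"

lemma finite_cells:
  assumes "finite V" "finite E" "\<epsilon> > 0"
  shows "finite (cell \<epsilon> ` mpoints V E A)"
proof (rule finite_subset)
  have "\<lfloor>s / \<epsilon>\<rfloor> \<in> {0..\<lceil>A e / \<epsilon>\<rceil>}" if "0 < s" "s < A e" for e s
  proof -
    have "\<lfloor>s / \<epsilon>\<rfloor> \<le> \<lceil>A e / \<epsilon>\<rceil>"
      using that assms(3) by (meson divide_right_mono floor_le_ceiling ceiling_mono less_imp_le order_trans)
    then show ?thesis
      using that assms(3) by simp
  qed
  then show "cell \<epsilon> ` mpoints V E A \<subseteq> Inl ` V \<union> Inr ` (SIGMA e:E. {0..\<lceil>A e / \<epsilon>\<rceil>})"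
    by (auto simp: mpoints_def cell_def)
  show "finite (Inl ` V \<union> Inr ` (SIGMA e:E. {0..\<lceil>A e / \<epsilon>\<rceil>}))"
    using assms by auto
qed

definition cell_path :: "real \<Rightarrow> ('v, 'e) mpoint \<Rightarrow> ('v, 'e) mpoint \<Rightarrow> real \<Rightarrow> ('v, 'e) mpoint" where
  "cell_path \<epsilon> p q a = (case (p, q) of
     (Inner e s, Inner _ s') \<Rightarrow> Inner e (s + (s' - s) * (a / \<epsilon>)) | _ \<Rightarrow> p)"

lemma cell_path_0: "cell_path \<epsilon> p q 0 = p"
  by (cases p; cases q) (auto simp: cell_path_def)

lemma cell_path_end: "\<epsilon> > 0 \<Longrightarrow> cell \<epsilon> p = cell \<epsilon> q \<Longrightarrow> cell_path \<epsilon> p q \<epsilon> = q"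
  by (cases p; cases q) (auto simp: cell_path_def cell_def)

lemma floor_divide_eq_imp_dist_less:
  assumes "(\<epsilon>::real) > 0" "\<lfloor>x / \<epsilon>\<rfloor> = \<lfloor>y / \<epsilon>\<rfloor>"
  shows "\<bar>x - y\<bar> < \<epsilon>"
  using floor_divide_lower[OF assms(1), of x] floor_divide_upper[OF assms(1), of x]
    floor_divide_lower[OF assms(1), of y] floor_divide_upper[OF assms(1), of y] assms(2)
  by (simp add: algebra_simps abs_less_iff)

lemma convex_interpolation_in_interval:
  fixes s s' \<theta> :: real
  assumes "lo < s" "s < hi" "lo < s'" "s' < hi" "0 \<le> \<theta>" "\<theta> \<le> 1"
  shows "lo < s + (s' - s) * \<theta> \<and> s + (s' - s) * \<theta> < hi"
proof -
  have eq: "s + (s' - s) * \<theta> = (1 - \<theta>) * s + \<theta> * s'"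
    by (simp add: algebra_simps)
  have "(1 - \<theta>) * s + \<theta> * s' < hi"
    by (rule convex_bound_lt) (use assms in auto)
  moreover have "(1 - \<theta>) * (- s) + \<theta> * (- s') < - lo"
    by (rule convex_bound_lt) (use assms in auto)
  ultimately show ?thesis
    unfolding eq by (simp add: algebra_simps)
qed

lemma lip1_path_cell_path:
  assumes G: "wgraph V E ends A phi" and \<epsilon>: "\<epsilon> > 0"
    and p: "p \<in> mpoints V E A" and q: "q \<in> mpoints V E A" and pq: "cell \<epsilon> p = cell \<epsilon> q"
  shows "lip1_path (mdist E ends A) (mpoints V E A) {0..\<epsilon>} (cell_path \<epsilon> p q)"
proof (cases p)
  case (Node u)
  then have "q = p" "cell_path \<epsilon> p q = (\<lambda>_. p)"
    using pq by (cases q; auto simp: cell_def cell_path_def)+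
  moreover have "mdist E ends A p p \<le> 0"
    using Node node_dist_self_le[OF G] by (simp add: mdist_def dist_node_def)
  ultimately show ?thesis
    using p unfolding lip1_path_def by auto
next
  case (Inner e s)
  then obtain s' where q': "q = Inner e s'" and fl: "\<lfloor>s / \<epsilon>\<rfloor> = \<lfloor>s' / \<epsilon>\<rfloor>"
    using pq by (cases q) (auto simp: cell_def)
  have close: "\<bar>s' - s\<bar> < \<epsilon>"
    using floor_divide_eq_imp_dist_less[OF \<epsilon> fl] by linarith
  have e: "e \<in> E" "0 < s" "s < A e" "0 < s'" "s' < A e"
    using p q Inner q' by (auto simp: mpoints_def)
  define pos where "pos a = s + (s' - s) * (a / \<epsilon>)" for a
  have path: "cell_path \<epsilon> p q a = Inner e (pos a)" for a
    by (simp add: cell_path_def Inner q' pos_def)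
  have "cell_path \<epsilon> p q a \<in> mpoints V E A" if "a \<in> {0..\<epsilon>}" for a
  proof -
    have "0 < pos a \<and> pos a < A e"
      unfolding pos_def using e that \<epsilon> by (intro convex_interpolation_in_interval) auto
    then show ?thesis
      using e unfolding path mpoints_def by auto
  qed
  moreover have "mdist E ends A (cell_path \<epsilon> p q a) (cell_path \<epsilon> p q a') \<le> \<bar>a - a'\<bar>" for a a'
  proof -
    have "mdist E ends A (cell_path \<epsilon> p q a) (cell_path \<epsilon> p q a') \<le> \<bar>pos a - pos a'\<bar>"
      unfolding path by (rule mdist_le_same_edge)
    also have "\<dots> = \<bar>s' - s\<bar> * (\<bar>a - a'\<bar> / \<epsilon>)"
      using \<epsilon> by (simp add: pos_def abs_mult diff_divide_distrib[symmetric] right_diff_distrib[symmetric])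
    also have "\<dots> \<le> \<epsilon> * (\<bar>a - a'\<bar> / \<epsilon>)"
      using close \<epsilon> by (intro mult_right_mono) auto
    finally show ?thesis
      using \<epsilon> by simp
  qed
  ultimately show ?thesis
    unfolding lip1_path_def by blast
qed

section \<open>Latency\<close>

definition visits :: "nat \<Rightarrow> ('v, 'e) strategy \<Rightarrow> 'v \<Rightarrow> real \<Rightarrow> real set" where
  "visits k str v t = {t'. 0 \<le> t' \<and> t' \<le> t \<and> (\<exists>i<k. str t' i = Node v)}"

lemma latency_visits:
  "latency k str v t = t - (if visits k str v t = {} then 0 else Sup (visits k str v t))"
  unfolding latency_def last_visit_def visits_def Let_def ..

lemma bdd_above_visits: "bdd_above (visits k str v t)"
  by (rule bdd_aboveI[of _ t]) (auto simp: visits_def)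

lemma latency_le_of_visit:
  assumes "0 \<le> w" "w \<le> t" "i < k" "str w i = Node v"
  shows "latency k str v t \<le> t - w"
proof -
  have w: "w \<in> visits k str v t"
    using assms by (auto simp: visits_def)
  then have "w \<le> Sup (visits k str v t)"
    by (intro cSup_upper bdd_above_visits)
  then show ?thesis
    using w unfolding latency_visits by auto
qed

lemma latency_nonneg:
  assumes "0 \<le> t"
  shows "0 \<le> latency k str v t"
proof (cases "visits k str v t = {}")
  case False
  then have "Sup (visits k str v t) \<le> t"
    by (intro cSup_least) (auto simp: visits_def)
  then show ?thesis
    using False unfolding latency_visits by simp
qed (simp add: assms latency_visits)

lemma visit_before_of_latency_less:
  assumes "latency k str v t < t" "\<eta> > 0"
  obtains w i where "0 \<le> w" "w \<le> t" "i < k" "str w i = Node v"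
    "t - w < latency k str v t + \<eta>"
proof -
  have ne: "visits k str v t \<noteq> {}"
    using assms(1) unfolding latency_visits by auto
  then have "t - latency k str v t - \<eta> < Sup (visits k str v t)"
    using assms(2) unfolding latency_visits by simp
  then obtain w where "w \<in> visits k str v t" "t - latency k str v t - \<eta> < w"
    using less_cSup_iff[OF ne bdd_above_visits] by blast
  then show ?thesis
    using that by (force simp: visits_def)
qed

lemma latency_cong:
  assumes "\<And>w i. 0 \<le> w \<Longrightarrow> w \<le> t \<Longrightarrow> i < k \<Longrightarrow> str w i = str' w i"
  shows "latency k str v t = latency k str' v t"
proof -
  have "visits k str v t = visits k str' v t"
    using assms by (auto simp: visits_def)
  then show ?thesis
    unfolding latency_visits by simp
qed

section \<open>Closing a strategy into a loop\<close>

lemma feasible_iff_lip1_path: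
  "feasible V E ends A k str \<longleftrightarrow>
     (\<forall>i<k. lip1_path (mdist E ends A) (mpoints V E A) {0..} (\<lambda>t. str t i))"
  unfolding feasible_def lip1_path_def by auto

definition loop_body :: "real \<Rightarrow> real \<Rightarrow> real \<Rightarrow> ('v, 'e) strategy \<Rightarrow> ('v, 'e) strategy" where
  "loop_body \<epsilon> t1 t2 str t i =
     (if t \<le> t2 then str t i
      else if t < t2 + \<epsilon> then cell_path \<epsilon> (str t2 i) (str t1 i) (t - t2)
      else str (t - (t2 - t1 + \<epsilon>)) i)"

definition loop_strategy :: "real \<Rightarrow> real \<Rightarrow> real \<Rightarrow> ('v, 'e) strategy \<Rightarrow> ('v, 'e) strategy" where
  "loop_strategy \<epsilon> t1 t2 str = periodic_after t2 (t2 - t1 + \<epsilon>) (loop_body \<epsilon> t1 t2 str)"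

context
  fixes \<epsilon> t1 t2 :: real and str :: "('v, 'e) strategy"
  assumes \<epsilon>: "\<epsilon> > 0" and t1: "0 \<le> t1" and t12: "t1 \<le> t2"
begin

lemma loop_strategy_prefix: "t \<le> t2 \<Longrightarrow> loop_strategy \<epsilon> t1 t2 str t i = str t i"
  using \<epsilon> t12 by (simp add: loop_strategy_def loop_body_def periodic_after_eq)

lemma loop_strategy_replay:
  assumes "t1 \<le> w" "w \<le> t2"
  shows "loop_strategy \<epsilon> t1 t2 str (w + real n * (t2 - t1 + \<epsilon>)) i = str w i"
proof (cases n)
  case 0
  then show ?thesis
    using assms loop_strategy_prefix by simp
next
  case (Suc m)
  let ?P = "t2 - t1 + \<epsilon>"
  have P: "0 < ?P"
    using \<epsilon> t12 by simp
  have "loop_strategy \<epsilon> t1 t2 str (w + real n * ?P) = loop_strategy \<epsilon> t1 t2 str (w + ?P + real m * ?P)"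
    by (simp add: Suc algebra_simps)
  also have "\<dots> = loop_strategy \<epsilon> t1 t2 str (w + ?P)"
    unfolding loop_strategy_def using assms P \<epsilon> by (intro periodic_after_add_mult) auto
  also have "\<dots> = loop_body \<epsilon> t1 t2 str (w + ?P)"
    unfolding loop_strategy_def using assms P \<epsilon>
    by (intro periodic_after_eq_closed) (auto simp: loop_body_def)
  finally show ?thesis
    using assms \<epsilon> by (simp add: loop_body_def)
qed

lemma periodic_loop_strategy: "periodic k (loop_strategy \<epsilon> t1 t2 str)"
proof -
  let ?P = "t2 - t1 + \<epsilon>"
  have "loop_strategy \<epsilon> t1 t2 str (t2 + t + ?P) = loop_strategy \<epsilon> t1 t2 str (t2 + t)" if "0 \<le> t" for t
    unfolding loop_strategy_def using periodic_after_add_mult[of ?P t2 "t2 + t" _ 1] that \<epsilon> t12 by simp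
  then have "\<forall>t\<ge>0. \<forall>i<k. loop_strategy \<epsilon> t1 t2 str (t2 + t + ?P) i = loop_strategy \<epsilon> t1 t2 str (t2 + t) i"
    by simp
  moreover have "0 < ?P" "0 \<le> t2"
    using \<epsilon> t1 t12 by simp_all
  ultimately show ?thesis
    unfolding periodic_def by blast
qed

context
  fixes V :: "'v set" and E :: "'e set" and ends :: "'e \<Rightarrow> 'v \<times> 'v"
    and A :: "'e \<Rightarrow> real" and phi :: "'v \<Rightarrow> real" and k :: nat
  assumes G: "wgraph V E ends A phi" and feas: "feasible V E ends A k str"
    and cells: "\<And>i. i < k \<Longrightarrow> cell \<epsilon> (str t2 i) = cell \<epsilon> (str t1 i)"
begin

lemma lip1_path_loop_body:
  assumes i: "i < k"
  shows "lip1_path (mdist E ends A) (mpoints V E A) {0..t2 + (t2 - t1 + \<epsilon>)}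
    (\<lambda>t. loop_body \<epsilon> t1 t2 str t i)"
proof -
  let ?lip = "lip1_path (mdist E ends A) (mpoints V E A)"
  let ?P = "t2 - t1 + \<epsilon>"
  let ?f = "\<lambda>t. loop_body \<epsilon> t1 t2 str t i"
  have str_lip: "?lip {0..} (\<lambda>t. str t i)"
    using feas i unfolding feasible_iff_lip1_path by blast
  have str_mem: "str t i \<in> mpoints V E A" if "0 \<le> t" for t
    using lip1_pathD(1)[OF str_lip] that by simp
  have prefix: "?lip {0..t2} ?f"
    using lip1_path_subset[OF str_lip, of "{0..t2}"] by (rule lip1_path_cong) (auto simp: loop_body_def)
  have return: "?lip {t2..t2 + \<epsilon>} ?f"
  proof -
    have "?lip {0..\<epsilon>} (cell_path \<epsilon> (str t2 i) (str t1 i))"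
      using lip1_path_cell_path[OF G \<epsilon> str_mem str_mem cells[OF i]] t1 t12 by simp
    then have "?lip {0 + t2..\<epsilon> + t2} (\<lambda>t. cell_path \<epsilon> (str t2 i) (str t1 i) (t - t2))"
      by (rule lip1_path_shift)
    then have "?lip {t2..t2 + \<epsilon>} (\<lambda>t. cell_path \<epsilon> (str t2 i) (str t1 i) (t - t2))"
      by (simp add: add.commute)
    then show ?thesis
      by (rule lip1_path_cong)
        (auto simp: loop_body_def cell_path_0 cell_path_end[OF \<epsilon> cells[OF i]] add.commute)
  qed
  have replay: "?lip {t2 + \<epsilon>..t2 + ?P} ?f"
  proof -
    have "?lip {t1 + ?P..t2 + ?P} (\<lambda>t. str (t - ?P) i)"
      using lip1_path_subset[OF str_lip, of "{t1..t2}"] t1 by (intro lip1_path_shift) auto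
    then have "?lip {t2 + \<epsilon>..t2 + ?P} (\<lambda>t. str (t - ?P) i)"
      by simp
    then show ?thesis
      by (rule lip1_path_cong) (use \<epsilon> in \<open>auto simp: loop_body_def\<close>)
  qed
  have tri: "triangle_on (mpoints V E A) (mdist E ends A)"
    by (rule triangle_on_mdist[OF G])
  show ?thesis
    by (rule lip1_path_union[OF tri lip1_path_union[OF tri prefix return] replay])
qed

lemma feasible_loop_strategy: "feasible V E ends A k (loop_strategy \<epsilon> t1 t2 str)"
  unfolding feasible_iff_lip1_path loop_strategy_def periodic_after_apply
proof (intro allI impI)
  fix i assume "i < k"
  moreover have "loop_body \<epsilon> t1 t2 str (t2 + (t2 - t1 + \<epsilon>)) i = loop_body \<epsilon> t1 t2 str t2 i"
    using \<epsilon> t12 by (simp add: loop_body_def)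
  ultimately show "lip1_path (mdist E ends A) (mpoints V E A) {0..}
      (periodic_after t2 (t2 - t1 + \<epsilon>) (\<lambda>t. loop_body \<epsilon> t1 t2 str t i))"
    using t1 t12 \<epsilon>
    by (intro lip1_path_periodic_after[OF triangle_on_mdist[OF G] lip1_path_loop_body]) auto
qed

end

end

context
  fixes \<epsilon> t1 t2 :: real and str :: "('v, 'e) strategy"
  assumes \<epsilon>: "\<epsilon> > 0" and t1: "0 \<le> t1" and t12: "t1 \<le> t2"
begin

lemma latency_loop_strategy_le_replayed:
  assumes "t1 \<le> w" "w \<le> t2" "i < k" "str w i = Node v" "w + real n * (t2 - t1 + \<epsilon>) \<le> t"
  shows "latency k (loop_strategy \<epsilon> t1 t2 str) v t \<le> t - (w + real n * (t2 - t1 + \<epsilon>))"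
proof (rule latency_le_of_visit)
  show "0 \<le> w + real n * (t2 - t1 + \<epsilon>)"
    using assms(1) t1 t12 \<epsilon> by (simp add: add_increasing2)
  show "loop_strategy \<epsilon> t1 t2 str (w + real n * (t2 - t1 + \<epsilon>)) i = Node v"
    using loop_strategy_replay[OF \<epsilon> t1 t12 assms(1,2), where n=n and str=str and i=i] assms(4)
    by (simp only:)
qed (use assms in auto)

(* The last visit before t2 lies in [t1, t2], so the loop repeats it one period earlier. *)
lemma latency_loop_strategy_carry:
  assumes L2: "latency k str v t2 + \<epsilon> \<le> t2 - t1" and u: "t1 - \<epsilon> \<le> u" "u < t2"
  shows "latency k (loop_strategy \<epsilon> t1 t2 str) v (u + real (Suc m) * (t2 - t1 + \<epsilon>))
    < u - t1 + 2 * \<epsilon> + latency k str v t2"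
proof -
  let ?P = "t2 - t1 + \<epsilon>"
  have "latency k str v t2 < t2"
    using L2 t1 \<epsilon> by linarith
  then obtain w2 i2 where w2: "0 \<le> w2" "w2 \<le> t2" "i2 < k" "str w2 i2 = Node v"
    "t2 - w2 < latency k str v t2 + \<epsilon>"
    by (rule visit_before_of_latency_less[OF _ \<epsilon>])
  have "t1 \<le> w2"
    using w2(5) L2 by linarith
  moreover have "w2 + real m * ?P \<le> u + real (Suc m) * ?P"
    using w2(2) u by (simp add: algebra_simps)
  ultimately have "latency k (loop_strategy \<epsilon> t1 t2 str) v (u + real (Suc m) * ?P)
      \<le> u + real (Suc m) * ?P - (w2 + real m * ?P)"
    using w2 by (intro latency_loop_strategy_le_replayed) auto
  then show ?thesis
    using w2(5) by (simp add: algebra_simps)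
qed


lemma latency_loop_strategy_le_after_t2:
  assumes L2: "latency k str v t2 \<le> l" and l: "l < t1" "l + \<epsilon> \<le> t2 - t1"
    and Lu: "t1 \<le> u \<Longrightarrow> latency k str v u \<le> l"
    and close: "latency k str v t2 < latency k str v t1 + \<epsilon>"
    and u: "t1 - \<epsilon> \<le> u" "u < t2"
  shows "latency k (loop_strategy \<epsilon> t1 t2 str) v (u + real (Suc m) * (t2 - t1 + \<epsilon>)) \<le> l + 4 * \<epsilon>"
proof -
  let ?sh = "loop_strategy \<epsilon> t1 t2 str"
  let ?t = "u + real (Suc m) * (t2 - t1 + \<epsilon>)"
  have carry: "latency k ?sh v ?t < u - t1 + 2 * \<epsilon> + latency k str v t2"
    using L2 l u by (intro latency_loop_strategy_carry) auto
  show ?thesis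
  proof (cases "t1 \<le> u")
    case False
    then show ?thesis
      using carry L2 \<epsilon> by linarith
  next
    case True
    then have Lu: "latency k str v u \<le> l"
      by (rule Lu)
    then have "latency k str v u < u"
      using l True by linarith
    then obtain w i where w: "0 \<le> w" "w \<le> u" "i < k" "str w i = Node v"
        "u - w < latency k str v u + \<epsilon>"
      by (rule visit_before_of_latency_less[OF _ \<epsilon>])
    show ?thesis
    proof (cases "t1 \<le> w")
      case True
      have "latency k ?sh v ?t \<le> ?t - (w + real (Suc m) * (t2 - t1 + \<epsilon>))"
        using True w u by (intro latency_loop_strategy_le_replayed) auto
      then show ?thesis
        using w(5) Lu \<epsilon> by simp
    next
      case False
      then have "latency k str v t1 \<le> t1 - w"
        using w by (intro latency_le_of_visit) auto
      then show ?thesis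
        using carry close w(5) Lu by linarith
    qed
  qed
qed

end

lemma latency_loop_strategy_le:
  assumes \<epsilon>: "\<epsilon> > 0" and T0: "0 \<le> T0" "T0 \<le> t1" and l: "l < t1" "l + \<epsilon> \<le> t2 - t1"
    and bound: "\<And>t. T0 \<le> t \<Longrightarrow> latency k str v t \<le> l"
    and close: "latency k str v t2 < latency k str v t1 + \<epsilon>"
    and t: "T0 \<le> t"
  shows "latency k (loop_strategy \<epsilon> t1 t2 str) v t \<le> l + 4 * \<epsilon>"
proof -
  let ?P = "t2 - t1 + \<epsilon>"
  have "0 \<le> l"
    using latency_nonneg[of t1 k str v] bound[of t1] T0 by simp
  then have t1: "0 \<le> t1" and t12: "t1 \<le> t2" and P: "0 < ?P"
    using T0 l \<epsilon> by auto
  show ?thesis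
  proof (cases "t \<le> t2")
    case True
    then have "latency k (loop_strategy \<epsilon> t1 t2 str) v t = latency k str v t"
      by (intro latency_cong loop_strategy_prefix[OF \<epsilon> t1 t12]) auto
    then show ?thesis
      using bound[OF t] \<epsilon> by simp
  next
    case False
    have "t1 - \<epsilon> \<le> t"
      using False t12 \<epsilon> by simp
    then obtain n u where u: "t1 - \<epsilon> \<le> u" "u < t1 - \<epsilon> + ?P" and t_eq: "t = u + real n * ?P"
      using split_period[OF P] by blast
    obtain m where n: "n = Suc m"
      using False u t_eq by (cases n) auto
    show ?thesis
      unfolding t_eq n using T0 t12 u l close
      by (intro latency_loop_strategy_le_after_t2[OF \<epsilon> t1 t12] bound) auto
  qed
qed

section \<open>Recurrence and the periodic strategy\<close>

lemma finite_state_repeats: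
  fixes f :: "nat \<Rightarrow> 'i \<Rightarrow> 'a" and g :: "nat \<Rightarrow> 'j \<Rightarrow> 'b"
  assumes "finite I" "finite X" "\<And>n i. i \<in> I \<Longrightarrow> f n i \<in> X"
    and "finite J" "finite Y" "\<And>n j. j \<in> J \<Longrightarrow> g n j \<in> Y"
  obtains n m where "n < m" "\<And>i. i \<in> I \<Longrightarrow> f n i = f m i" "\<And>j. j \<in> J \<Longrightarrow> g n j = g m j"
proof -
  define state where "state n = (restrict (f n) I, restrict (g n) J)" for n
  have "range state \<subseteq> (\<Pi>\<^sub>E i\<in>I. X) \<times> (\<Pi>\<^sub>E j\<in>J. Y)"
    using assms by (auto simp: state_def)
  moreover have "finite ((\<Pi>\<^sub>E i\<in>I. X) \<times> (\<Pi>\<^sub>E j\<in>J. Y))"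
    using assms by (simp add: finite_PiE)
  ultimately have "\<not> inj state"
    using finite_imageD finite_subset infinite_UNIV_nat by blast
  then obtain n m where nm: "n \<noteq> m" "state n = state m"
    unfolding inj_def by blast
  then have fI: "restrict (f n) I = restrict (f m) I" and gJ: "restrict (g n) J = restrict (g m) J"
    by (simp_all add: state_def)
  have f: "f n i = f m i" if "i \<in> I" for i
    using fun_cong[OF fI, of i] that by simp
  have g: "g n j = g m j" if "j \<in> J" for j
    using fun_cong[OF gJ, of j] that by simp
  show ?thesis
  proof (cases "n < m")
    case True
    then show ?thesis
      using that[of n m] f g by blast
  next
    case False
    then have "m < n"
      using nm(1) by simp
    then show ?thesis
      using that[of m n] f g by (metis (no_types))
  qed
qed

lemma exists_recurrent_times:
  assumes G: "wgraph V E ends A phi" and feas: "feasible V E ends A k str"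
    and \<epsilon>: "\<epsilon> > 0" and T0: "0 \<le> T0" and H: "H > 0"
    and bound: "\<And>v t. v \<in> V \<Longrightarrow> T0 \<le> t \<Longrightarrow> latency k str v t \<le> \<Lambda>"
  obtains t1 t2 where "T0 + H \<le> t1" "t1 + H \<le> t2"
    "\<And>i. i < k \<Longrightarrow> cell \<epsilon> (str t2 i) = cell \<epsilon> (str t1 i)"
    "\<And>v. v \<in> V \<Longrightarrow> \<bar>latency k str v t1 - latency k str v t2\<bar> < \<epsilon>"
proof -
  define s where "s n = T0 + real (Suc n) * H" for n
  have s: "T0 \<le> s n" "0 \<le> s n" for n
    using T0 H by (auto simp: s_def)
  have floor_range: "\<lfloor>latency k str v (s n) / \<epsilon>\<rfloor> \<in> {0..\<lfloor>\<Lambda> / \<epsilon>\<rfloor>}" if "v \<in> V" for v n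
  proof -
    have "0 \<le> latency k str v (s n) / \<epsilon>"
      using latency_nonneg[OF s(2)[of n], of k str v] \<epsilon> by simp
    moreover have "latency k str v (s n) / \<epsilon> \<le> \<Lambda> / \<epsilon>"
      using bound[OF that s(1)] \<epsilon> by (simp add: divide_right_mono)
    ultimately show ?thesis
      by (simp add: floor_mono)
  qed
  have cell_range: "cell \<epsilon> (str (s n) i) \<in> cell \<epsilon> ` mpoints V E A" if "i \<in> {..<k}" for i n
    using feas s(2)[of n] that unfolding feasible_def by (intro imageI) auto
  have finV: "finite V" and finE: "finite E"
    using G by (simp_all add: wgraph_def)
  have fin_cells: "finite (cell \<epsilon> ` mpoints V E A)"
    by (rule finite_cells[OF finV finE \<epsilon>])
  show ?thesis
  proof (rule finite_state_repeats[OF finite_lessThan fin_cells cell_range finV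
        finite_atLeastAtMost_int floor_range])
    fix n m assume nm: "n < m"
      and cells: "\<And>i. i \<in> {..<k} \<Longrightarrow> cell \<epsilon> (str (s n) i) = cell \<epsilon> (str (s m) i)"
      and floors: "\<And>v. v \<in> V \<Longrightarrow> \<lfloor>latency k str v (s n) / \<epsilon>\<rfloor> = \<lfloor>latency k str v (s m) / \<epsilon>\<rfloor>"
    show ?thesis
    proof (rule that[of "s n" "s m"])
      show "T0 + H \<le> s n"
        using T0 H by (simp add: s_def)
      have "real (Suc (Suc n)) * H \<le> real (Suc m) * H"
        using nm H by (intro mult_right_mono) auto
      then show "s n + H \<le> s m"
        by (simp add: s_def algebra_simps)
    qed (use cells floors floor_divide_eq_imp_dist_less[OF \<epsilon>] in auto)
  qed
qed

lemma periodic_strategy_latency_le: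
  assumes G: "wgraph V E ends A phi" and feas: "feasible V E ends A k str"
    and T0: "0 \<le> T0" and \<epsilon>: "\<epsilon> > 0"
    and bound: "\<And>v t. v \<in> V \<Longrightarrow> T0 \<le> t \<Longrightarrow> latency k str v t \<le> l v"
  obtains sh where "feasible V E ends A k sh" "periodic k sh"
    "\<And>v t. v \<in> V \<Longrightarrow> T0 \<le> t \<Longrightarrow> latency k sh v t \<le> l v + 4 * \<epsilon>"
proof -
  define \<Lambda> where "\<Lambda> = Max (l ` V)"
  have "finite V"
    using G by (simp add: wgraph_def)
  then have l_le: "l v \<le> \<Lambda>" if "v \<in> V" for v
    using that unfolding \<Lambda>_def by simp
  define H where "H = \<bar>\<Lambda>\<bar> + \<epsilon>"
  have H: "H > 0"
    using \<epsilon> by (simp add: H_def add_nonneg_pos)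
  have "latency k str v t \<le> \<Lambda>" if "v \<in> V" "T0 \<le> t" for v t
    using bound[OF that] l_le[OF that(1)] by linarith
  then obtain t1 t2 where t1: "T0 + H \<le> t1" and t2: "t1 + H \<le> t2"
    and cells: "\<And>i. i < k \<Longrightarrow> cell \<epsilon> (str t2 i) = cell \<epsilon> (str t1 i)"
    and close: "\<And>v. v \<in> V \<Longrightarrow> \<bar>latency k str v t1 - latency k str v t2\<bar> < \<epsilon>"
    using exists_recurrent_times[OF G feas \<epsilon> T0 H] by blast
  have t12: "t1 \<le> t2" and t1_nonneg: "0 \<le> t1"
    using t1 t2 T0 H by auto
  show ?thesis
  proof (rule that)
    show "feasible V E ends A k (loop_strategy \<epsilon> t1 t2 str)"
      by (rule feasible_loop_strategy[OF \<epsilon> t1_nonneg t12 G feas cells])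
    show "periodic k (loop_strategy \<epsilon> t1 t2 str)"
      by (rule periodic_loop_strategy[OF \<epsilon> t1_nonneg t12])
    show "latency k (loop_strategy \<epsilon> t1 t2 str) v t \<le> l v + 4 * \<epsilon>" if "v \<in> V" "T0 \<le> t" for v t
      using l_le[OF that(1)] close[OF that(1)] t1 t2 T0 that
      by (intro latency_loop_strategy_le[OF \<epsilon> T0]) (auto simp: H_def bound)
  qed
qed

lemma max_wlatency_le_iff:
  "finite V \<Longrightarrow> V \<noteq> {} \<Longrightarrow>
    max_wlatency V phi k str t \<le> B \<longleftrightarrow> (\<forall>v\<in>V. phi v * latency k str v t \<le> B)"
  unfolding max_wlatency_def by simp

lemma periodic_strategy_max_wlatency_le:
  assumes G: "wgraph V E ends A phi" and feas: "feasible V E ends A k str"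
    and T0: "0 \<le> T0" and \<delta>: "\<delta> > 0"
    and bound: "\<And>t. T0 \<le> t \<Longrightarrow> max_wlatency V phi k str t \<le> B"
  obtains sh where "feasible V E ends A k sh" "periodic k sh"
    "\<And>t. T0 \<le> t \<Longrightarrow> max_wlatency V phi k sh t \<le> B + \<delta>"
proof -
  have V: "finite V" "V \<noteq> {}" and phi: "\<And>v. v \<in> V \<Longrightarrow> phi v > 0"
    using G unfolding wgraph_def by auto
  define \<Phi> where "\<Phi> = Max (phi ` V)"
  have phi_le: "phi v \<le> \<Phi>" if "v \<in> V" for v
    using V that unfolding \<Phi>_def by simp
  have \<Phi>: "\<Phi> > 0"
    using V phi phi_le by (metis all_not_in_conv order_less_le_trans)
  define \<epsilon> where "\<epsilon> = \<delta> / (4 * \<Phi>)"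
  have \<epsilon>: "\<epsilon> > 0"
    using \<delta> \<Phi> by (simp add: \<epsilon>_def)
  have "latency k str v t \<le> B / phi v" if "v \<in> V" "T0 \<le> t" for v t
    using bound[OF that(2)] V phi[OF that(1)] that(1)
    by (simp add: max_wlatency_le_iff pos_le_divide_eq mult.commute)
  then obtain sh where sh: "feasible V E ends A k sh" "periodic k sh"
    and lat: "\<And>v t. v \<in> V \<Longrightarrow> T0 \<le> t \<Longrightarrow> latency k sh v t \<le> B / phi v + 4 * \<epsilon>"
    using periodic_strategy_latency_le[OF G feas T0 \<epsilon>, where l="\<lambda>v. B / phi v"] by blast
  have "max_wlatency V phi k sh t \<le> B + \<delta>" if "T0 \<le> t" for t
    unfolding max_wlatency_le_iff[OF V]
  proof
    fix v assume v: "v \<in> V"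
    have "phi v * latency k sh v t \<le> phi v * (B / phi v + 4 * \<epsilon>)"
      using lat[OF v that] phi[OF v] by (intro mult_left_mono) auto
    also have "\<dots> = B + 4 * \<epsilon> * phi v"
      using phi[OF v] by (simp add: algebra_simps)
    also have "4 * \<epsilon> * phi v \<le> 4 * \<epsilon> * \<Phi>"
      using phi_le[OF v] \<epsilon> by simp
    also have "4 * \<epsilon> * \<Phi> = \<delta>"
      using \<Phi> by (simp add: \<epsilon>_def)
    finally show "phi v * latency k sh v t \<le> B + \<delta>"
      by simp
  qed
  then show ?thesis
    using that sh by blast
qed

section \<open>The cost functional\<close>

lemma max_wlatency_nonneg:
  assumes "wgraph V E ends A phi" "0 \<le> t"
  shows "0 \<le> max_wlatency V phi k str t"
proof -
  obtain v where v: "v \<in> V" and V: "finite V" and "phi v > 0"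
    using assms(1) unfolding wgraph_def by auto
  then have "0 \<le> phi v * latency k str v t"
    using latency_nonneg[OF assms(2), of k str v] by simp
  also have "\<dots> \<le> max_wlatency V phi k str t"
    unfolding max_wlatency_def using V v by simp
  finally show ?thesis .
qed

lemma cost_ereal: "cost V phi k (ereal T0) str = (SUP t\<in>{T0..}. ereal (max_wlatency V phi k str t))"
  by (simp add: cost_def)

lemma cost_infinity: "cost V phi k \<infinity> str = Limsup at_top (\<lambda>t. ereal (max_wlatency V phi k str t))"
  by (simp add: cost_def)

lemma cost_nonneg:
  assumes "wgraph V E ends A phi" "T \<ge> 0"
  shows "0 \<le> cost V phi k T str"
proof (cases T)
  case (real T0)
  have "ereal (max_wlatency V phi k str T0) \<le> cost V phi k T str"
    unfolding real cost_ereal by (intro SUP_upper) auto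
  then show ?thesis
    using max_wlatency_nonneg[OF assms(1), of T0 k str] real assms(2)
    by (metis ereal_less_eq(5) order_trans zero_ereal_def)
next
  case PInf
  have "\<forall>\<^sub>F t in at_top. 0 \<le> ereal (max_wlatency V phi k str t)"
    using max_wlatency_nonneg[OF assms(1)] by (intro eventually_at_top_linorderI[of 0]) simp
  then show ?thesis
    unfolding PInf cost_infinity by (intro le_Limsup) simp_all
qed (use assms(2) in simp)

lemma eventually_bounded_of_cost_less:
  assumes "T \<ge> 0" "cost V phi k T str < ereal c"
  obtains T0 where "0 \<le> T0" "T = \<infinity> \<or> T = ereal T0"
    "\<And>t. T0 \<le> t \<Longrightarrow> max_wlatency V phi k str t \<le> c"
proof (cases T)
  case (real T0)
  have "ereal (max_wlatency V phi k str t) < ereal c" if "T0 \<le> t" for t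
    using assms(2) unfolding real cost_ereal by (meson SUP_upper atLeast_iff le_less_trans that)
  then show ?thesis
    using that[of T0] real assms(1) by (simp add: less_imp_le)
next
  case PInf
  have "\<forall>\<^sub>F t in at_top. ereal (max_wlatency V phi k str t) < ereal c"
    using assms(2) unfolding PInf cost_infinity by (rule Limsup_lessD)
  then obtain T1 where "\<And>t. T1 \<le> t \<Longrightarrow> max_wlatency V phi k str t < c"
    unfolding eventually_at_top_linorder by auto
  then show ?thesis
    using that[of "max T1 0"] PInf by force
qed (use assms(1) in simp)

lemma cost_le_of_eventually_bounded:
  assumes "T = \<infinity> \<or> T = ereal T0" "\<And>t. T0 \<le> t \<Longrightarrow> max_wlatency V phi k str t \<le> c"
  shows "cost V phi k T str \<le> ereal c"
  using assms(1)
proof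
  assume "T = \<infinity>"
  have "\<forall>\<^sub>F t in at_top. ereal (max_wlatency V phi k str t) \<le> ereal c"
    using assms(2) by (intro eventually_at_top_linorderI[of T0]) simp
  then show ?thesis
    unfolding \<open>T = \<infinity>\<close> cost_infinity by (intro Limsup_bounded) simp_all
next
  assume "T = ereal T0"
  then show ?thesis
    unfolding \<open>T = ereal T0\<close> cost_ereal using assms(2) by (intro SUP_least) auto
qed

theorem mainTheorem3:
  fixes V :: "'v set" and E :: "'e set" and ends :: "'e \<Rightarrow> 'v \<times> 'v"
    and A :: "'e \<Rightarrow> real" and phi :: "'v \<Rightarrow> real" and k :: nat
    and T :: ereal and str :: "('v, 'e) strategy" and delta :: real
  assumes "wgraph V E ends A phi"
    and "k \<ge> 1"
    and "T \<ge> 0"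
    and "feasible V E ends A k str"
    and "cost V phi k T str < \<infinity>"
    and "delta > 0"
  shows "\<exists>strhat. feasible V E ends A k strhat \<and> periodic k strhat \<and>
           cost V phi k T strhat \<le> cost V phi k T str + ereal delta"
proof -
  \<comment> \<open>Half of \<open>delta\<close> is spent on turning
    the bound on the cost of \<open>str\<close> into a bound that holds from some time on.\<close>
  obtain J where J: "cost V phi k T str = ereal J"
    using cost_nonneg[OF assms(1,3), of k str] assms(5) by (cases "cost V phi k T str") auto
  then have "cost V phi k T str < ereal (J + delta / 2)"
    using assms(6) by simp
  then obtain T0 where T0: "0 \<le> T0" "T = \<infinity> \<or> T = ereal T0"
    and bound: "\<And>t. T0 \<le> t \<Longrightarrow> max_wlatency V phi k str t \<le> J + delta / 2"
    using eventually_bounded_of_cost_less[OF assms(3)] by blast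
  obtain sh where "feasible V E ends A k sh" "periodic k sh"
    and sh_bound: "\<And>t. T0 \<le> t \<Longrightarrow> max_wlatency V phi k sh t \<le> J + delta / 2 + delta / 2"
    using periodic_strategy_max_wlatency_le[OF assms(1,4) T0(1) _ bound, of "delta / 2"] assms(6)
    by auto
  moreover have "cost V phi k T sh \<le> ereal (J + delta)"
    using sh_bound by (intro cost_le_of_eventually_bounded[OF T0(2)]) (simp add: add.commute)
  ultimately show ?thesis
    using J by auto
qed

end
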